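(* Let $P=P(G,[\omega])$ be a toric poset over $V$, and let $S\subseteq V$ be nonempty and either a toric interval $[i,j]^{\mathrm{tor}}$ of $P$ or a geometric toric antichain of $P$. Then the partition $\pi_S=\{S\}\cup\{\{v\}:v\in V\setminus S\}$ is closed with respect to $P$; that is, contracting $S$ defines a toric (quotient) morphism.
   Context: Toric poset setup: $V=[n]$; $\mathrm{Acyc}(G)$ acyclic orientations; $[\omega]$ the class under the equivalence generated by converting a source into a sink; toric chambers (components of $\mathbb{R}^V/\mathbb{Z}^V$ minus the hyperplanes $\{x_i\equiv x_j\bmod 1\}$, $\{i,j\}\in E$) correspond bijectively to classes $[\omega]$; $P(G,[\omega])$ is identified with its chamber $c(P)$. $D_\pi$, $D^{\mathrm{tor}}_\pi$ as usual ($x_i=x_j$ for $i,j$ in common blocks). Toric closure $\mathrm{cl}^{\mathrm{tor}}_P(\pi)$: coarsest $\bar\pi\ge\pi$ with $\overline{c(P)}\cap D^{\mathrm{tor}}_{\bar\pi}=\overline{c(P)}\cap D^{\mathrm{tor}}_\pi$; closed means $\pi=\mathrm{cl}^{\mathrm{tor}}_P(\pi)$; toric quotient morphisms are projections onto $D^{\mathrm{tor}}_\pi$ for closed $\pi$. Toric chain: $C=\{i_1,\dots,i_m\}$ with a cyclic class $[(i_1,\dots,i_m)]$ such that every $x\in c(P)$ (coordinates in $[0,1)$) has a cyclic shift $(j_1,\dots,j_m)$ with $0\le x_{j_1}<\dots<x_{j_m}<1$; $P|_C$ denotes this class. Toric interval: $[i,i]^{\mathrm{tor}}=\{i\}$;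 for $i\neq j$, empty if $\{i,j\}$ is not a toric chain, else $\{i,j\}\cup\{k:P|_{\{i,j,k\}}=[(i,k,j)]\}$. Geometric toric antichain: $A\subseteq V$ such that $D^{\mathrm{tor}}_{\pi_A}$ intersects the open chamber $c(P)$. *)

theory Defs
  imports "HOL-Analysis.Analysis" "HOL-Library.Disjoint_Sets"
begin

text \<open>Vertex set V is the finite type 'n (V = UNIV). A graph G is a symmetric irreflexive
edge relation E. Points of the torus R^V/Z^V are represented by their lifts in real^'n;
every torus-subset is represented by its (Z^V-invariant) preimage in real^'n.\<close>

definition int_vecs :: "(real^'n) set" where
  "int_vecs = {z. \<forall>i. z $ i \<in> \<int>}"

definition graph_complement :: "('n \<Rightarrow> 'n \<Rightarrow> bool) \<Rightarrow> (real^'n) set" where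
  "graph_complement E = {x. \<forall>i j. E i j \<longrightarrow> x $ i - x $ j \<notin> \<int>}"

text \<open>Preimage in real^'n of a toric chamber of G (a connected component of the torus minus
the toric graphic arrangement); it is the union of all Z^V-translates of a component of the
preimage of the complement.\<close>
definition toric_chamber :: "('n::finite \<Rightarrow> 'n \<Rightarrow> bool) \<Rightarrow> (real^'n) set \<Rightarrow> bool" where
  "toric_chamber E c \<longleftrightarrow> (\<exists>C \<in> components (graph_complement E).
      c = (\<Union>z\<in>int_vecs. (\<lambda>x. x + z) ` C))"

definition D_tor :: "'n set set \<Rightarrow> (real^'n) set" where
  "D_tor \<pi> = {x. \<forall>B\<in>\<pi>. \<forall>i\<in>B. \<forall>j\<in>B. x $ i - x $ j \<in> \<int>}"

definition coarser_eq :: "'n set set \<Rightarrow> 'n set set \<Rightarrow> bool" where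
  "coarser_eq \<pi> \<pi>' \<longleftrightarrow> (\<forall>B\<in>\<pi>. \<exists>B'\<in>\<pi>'. B \<subseteq> B')"

definition toric_closure :: "(real^'n) set \<Rightarrow> 'n set set \<Rightarrow> 'n set set" where
  "toric_closure c \<pi> = (THE \<sigma>.
      partition_on UNIV \<sigma> \<and> coarser_eq \<pi> \<sigma> \<and> closure c \<inter> D_tor \<sigma> = closure c \<inter> D_tor \<pi> \<and>
      (\<forall>\<tau>. partition_on UNIV \<tau> \<and> coarser_eq \<pi> \<tau> \<and> closure c \<inter> D_tor \<tau> = closure c \<inter> D_tor \<pi>
            \<longrightarrow> coarser_eq \<tau> \<sigma>))"

definition toric_closed :: "(real^'n) set \<Rightarrow> 'n set set \<Rightarrow> bool" where
  "toric_closed c \<pi> \<longleftrightarrow> \<pi> = toric_closure c \<pi>"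

text \<open>The (distinct) list cs represents a cyclic order [cs] such that every x in c with
coordinates in [0,1) has a cyclic shift of cs along which x strictly increases.
Thus P|_(set cs) = [cs]. (The condition is invariant under rotation of cs.)\<close>
definition toric_chain_order :: "(real^'n) set \<Rightarrow> 'n list \<Rightarrow> bool" where
  "toric_chain_order c cs \<longleftrightarrow> distinct cs \<and>
     (\<forall>x\<in>c. (\<forall>i. 0 \<le> x $ i \<and> x $ i < 1) \<longrightarrow>
        (\<exists>k. sorted_wrt (\<lambda>a b. x $ a < x $ b) (rotate k cs)))"

definition toric_chain :: "(real^'n) set \<Rightarrow> 'n set \<Rightarrow> bool" where
  "toric_chain c C \<longleftrightarrow> (\<exists>cs. set cs = C \<and> toric_chain_order c cs)"

definition toric_interval :: "(real^'n) set \<Rightarrow> 'n \<Rightarrow> 'n \<Rightarrow> 'n set" where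
  "toric_interval c i j =
     (if i = j then {i}
      else if \<not> toric_chain c {i, j} then {}
      else {i, j} \<union> {k. toric_chain_order c [i, k, j]})"

definition pi_of :: "'n set \<Rightarrow> 'n set set" where
  "pi_of S = {S} \<union> {{v} | v. v \<notin> S}"

definition geometric_toric_antichain :: "(real^'n) set \<Rightarrow> 'n set \<Rightarrow> bool" where
  "geometric_toric_antichain c A \<longleftrightarrow> D_tor (pi_of A) \<inter> c \<noteq> {}"

end

theory Submission
  imports Defs
begin

text \<open>A partition \<open>\<sigma>\<close> coarser than \<open>\<pi>_S\<close> but different from it has a block containing two
elements \<open>v \<noteq> w\<close> with \<open>v \<notin> S\<close>, so it suffices to find, for every such pair, a point of
\<open>closure c \<inter> D_tor (pi_of S)\<close> with \<open>x_v \<noteq> x_w\<close> mod 1. If \<open>S\<close> is a geometric antichain, start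
from a point of \<open>c \<inter> D_tor (pi_of S)\<close> and move its \<open>v\<close>-coordinate slightly: \<open>x_v - x_w\<close> then
sweeps an interval. If \<open>S = [i,j]\<close>, normalise a point of \<open>c\<close> to \<open>x_i = 0\<close> and coordinates in
\<open>[0,1)\<close>; the members of \<open>S\<close> then have coordinates in \<open>[0, x_j]\<close>, and shrinking all such coordinates
linearly to \<open>0\<close> never crosses an edge hyperplane, so the limit lies in
\<open>closure c \<inter> D_tor (pi_of S)\<close>. Choosing the starting point so that \<open>v\<close> is not cyclically between
\<open>i\<close> and \<open>j\<close>, the coordinate \<open>x_v\<close> can again be moved freely in a small interval above \<open>x_j\<close>.\<close>

lemma Ints_abs_less_one_eq_0: "(r::real) \<in> \<int> \<Longrightarrow> \<bar>r\<bar> < 1 \<Longrightarrow> r = 0"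
  by (elim Ints_cases) auto

lemma open_interval_not_subset_Ints_translate:
  fixes p q K :: real
  assumes "p < q"
  obtains t where "p < t" "t < q" "t + K \<notin> \<int>"
proof -
  define d where "d = min (q - p) 1 / 3"
  have "0 < d" "3 * d \<le> q - p" "3 * d \<le> 1" using assms by (auto simp: d_def)
  then have d: "0 < d" "d < 1" "p + d + d < q" using assms by linarith+
  have "p + d + K \<notin> \<int> \<or> p + d + d + K \<notin> \<int>"
  proof (rule ccontr)
    assume "\<not> ?thesis"
    then have "(p + d + d + K) - (p + d + K) \<in> \<int>" by (blast intro: Ints_diff)
    then show False using Ints_abs_less_one_eq_0[of d] d by simp
  qed
  then show thesis using that[of "p + d"] that[of "p + d + d"] d by auto
qed

subsection \<open>Toric chambers\<close>

lemma open_graph_complement: "open (graph_complement (E :: 'n::finite \<Rightarrow> 'n \<Rightarrow> bool))"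
proof -
  have "closed ((\<lambda>x::real^'n. x$i - x$j) -` \<int>)" for i j
    by (intro continuous_closed_vimage continuous_intros) simp
  then have "open {x::real^'n. x$i - x$j \<notin> \<int>}" for i j
    by (simp add: open_Collect_neg closed_def vimage_def Collect_neg_eq[symmetric])
  moreover have "graph_complement E = (\<Inter>(i, j)\<in>{(i, j). E i j}. {x. x$i - x$j \<notin> \<int>})"
    by (auto simp: graph_complement_def)
  ultimately show ?thesis by (auto intro: open_INT)
qed

lemma graph_complement_add_int_vec:
  assumes "x \<in> graph_complement E" "z \<in> int_vecs"
  shows "x + z \<in> graph_complement E"
  unfolding graph_complement_def
proof (intro CollectI allI impI)
  fix i j assume "E i j"
  then have "x$i - x$j \<notin> \<int>" using assms(1) by (auto simp: graph_complement_def)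
  moreover have "z$i - z$j \<in> \<int>" using assms(2) by (auto simp: int_vecs_def)
  moreover have "x$i - x$j = ((x + z)$i - (x + z)$j) - (z$i - z$j)" by simp
  ultimately show "(x + z)$i - (x + z)$j \<notin> \<int>" by (metis Ints_diff)
qed

lemma toric_chamber_subset_graph_complement: "toric_chamber E c \<Longrightarrow> c \<subseteq> graph_complement E"
  unfolding toric_chamber_def using in_components_subset graph_complement_add_int_vec by fastforce

lemma toric_chamber_add_int_vec:
  assumes "toric_chamber E c" "x \<in> c" "z \<in> int_vecs"
  shows "x + z \<in> c"
proof -
  obtain C where c: "c = (\<Union>z\<in>int_vecs. (\<lambda>x. x + z) ` C)"
    using assms(1) unfolding toric_chamber_def by blast
  then obtain z' w where "z' \<in> int_vecs" "w \<in> C" "x = w + z'" using assms(2) by blast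
  moreover have "z' + z \<in> int_vecs" if "z' \<in> int_vecs" using that assms(3) by (auto simp: int_vecs_def)
  ultimately show ?thesis unfolding c by (auto intro!: bexI[of _ "z' + z"] image_eqI[of _ _ w] simp: add.assoc)
qed

text \<open>Translating back by an integer vector moves \<open>T\<close> into the component defining \<open>c\<close>.\<close>

lemma connected_subset_toric_chamber:
  assumes "toric_chamber E c" "connected T" "T \<subseteq> graph_complement E" "x \<in> T" "x \<in> c"
  shows "T \<subseteq> c"
proof -
  obtain C where C: "C \<in> components (graph_complement E)" and c: "c = (\<Union>z\<in>int_vecs. (\<lambda>x. x + z) ` C)"
    using assms(1) unfolding toric_chamber_def by blast
  then obtain z w where z: "z \<in> int_vecs" and w: "w \<in> C" "x = w + z" using assms(5) by blast
  have mz: "- z \<in> int_vecs" using z by (auto simp: int_vecs_def)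
  let ?T = "(\<lambda>y. y + - z) ` T"
  have "connected ?T"
    using assms(2) by (intro connected_continuous_image continuous_intros)
  moreover have "?T \<subseteq> graph_complement E"
    using assms(3) graph_complement_add_int_vec[OF _ mz] by blast
  moreover have "w \<in> ?T" using assms(4) w by force
  ultimately have "?T \<subseteq> C" using components_maximal[OF C] w(1) by blast
  then have "T \<subseteq> (\<lambda>x. x + z) ` C" by force
  then show ?thesis unfolding c using z by blast
qed

lemma open_toric_chamber:
  assumes "toric_chamber E c" shows "open c"
proof -
  obtain C where C: "C \<in> components (graph_complement E)" and c: "c = (\<Union>z\<in>int_vecs. (\<lambda>x. x + z) ` C)"
    using assms unfolding toric_chamber_def by blast
  have "open ((\<lambda>x. z + x) ` C)" for z
    using open_components[OF open_graph_complement C] by (rule open_translation)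
  then show ?thesis unfolding c by (auto simp: add.commute)
qed

lemma toric_chamber_nonempty: "toric_chamber E c \<Longrightarrow> c \<noteq> {}"
proof -
  assume "toric_chamber E c"
  then obtain C where C: "C \<in> components (graph_complement E)" and c: "c = (\<Union>z\<in>int_vecs. (\<lambda>x. x + z) ` C)"
    unfolding toric_chamber_def by blast
  have "0 \<in> int_vecs" by (simp add: int_vecs_def)
  then show ?thesis using in_components_nonempty[OF C] c by auto
qed

lemma toric_chamber_add_const:
  assumes "toric_chamber E c" "x \<in> c"
  shows "x + (\<chi> k. s) \<in> c"
proof -
  let ?T = "range (\<lambda>r. x + (\<chi> k. r))"
  have "connected ?T"
    by (intro connected_continuous_image connected_UNIV continuous_intros)
  moreover have "?T \<subseteq> graph_complement E"
    using toric_chamber_subset_graph_complement[OF assms(1)] assms(2) by (auto simp: graph_complement_def)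
  moreover have "x \<in> ?T" by (rule range_eqI[of _ _ 0]) (simp add: vec_eq_iff)
  ultimately show ?thesis using connected_subset_toric_chamber[OF assms(1) _ _ _ assms(2)] by blast
qed

subsection \<open>Closedness of \<open>\<pi>_S\<close> from separating points\<close>

lemma D_tor_pi_of_iff: "y \<in> D_tor (pi_of S) \<longleftrightarrow> (\<forall>k\<in>S. \<forall>l\<in>S. y$k - y$l \<in> \<int>)"
  by (auto simp: D_tor_def pi_of_def)

lemma partition_on_pi_of: "S \<noteq> {} \<Longrightarrow> partition_on UNIV (pi_of S)"
  unfolding partition_on_def pi_of_def disjoint_def by auto

lemma coarser_eq_refl: "coarser_eq \<pi> \<pi>"
  by (auto simp: coarser_eq_def)

lemma coarser_eq_antisym:
  "\<lbrakk>partition_on A P; partition_on A Q; coarser_eq P Q; coarser_eq Q P\<rbrakk> \<Longrightarrow> P = Q"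
  by (rule refines_asym) (simp_all add: refines_def coarser_eq_def)

definition pi_of_separated :: "(real^'n) set \<Rightarrow> 'n set \<Rightarrow> bool" where
  "pi_of_separated c S \<longleftrightarrow>
     (\<forall>v w. v \<notin> S \<longrightarrow> w \<noteq> v \<longrightarrow> (\<exists>y \<in> closure c \<inter> D_tor (pi_of S). y$v - y$w \<notin> \<int>))"

lemma coarser_eq_pi_of_if_separated:
  assumes sep: "pi_of_separated c S"
    and eq: "closure c \<inter> D_tor \<tau> = closure c \<inter> D_tor (pi_of S)"
  shows "coarser_eq \<tau> (pi_of S)"
  unfolding coarser_eq_def
proof
  fix B assume B: "B \<in> \<tau>"
  have in_S: "a \<in> S" if ab: "a \<in> B" "b \<in> B" "a \<noteq> b" for a b
  proof (rule ccontr)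
    assume "a \<notin> S"
    then obtain y where y: "y \<in> closure c \<inter> D_tor (pi_of S)" "y$a - y$b \<notin> \<int>"
      using sep not_sym[OF ab(3)] unfolding pi_of_separated_def by blast
    then have "y \<in> D_tor \<tau>" using eq by blast
    then show False using B ab y(2) by (auto simp: D_tor_def)
  qed
  show "\<exists>B'\<in>pi_of S. B \<subseteq> B'"
  proof (cases "B \<subseteq> S")
    case False
    then obtain u where "u \<in> B" "u \<notin> S" by blast
    then have "B \<subseteq> {u}" "{u} \<in> pi_of S" using in_S by (auto simp: pi_of_def)
    then show ?thesis by blast
  qed (auto simp: pi_of_def)
qed

lemma toric_closed_pi_of_if_separated:
  assumes "S \<noteq> {}" "pi_of_separated c S"
  shows "toric_closed c (pi_of S)"
  unfolding toric_closed_def toric_closure_def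
proof (rule sym, rule the_equality, intro conjI allI impI)
  show "partition_on UNIV (pi_of S)" by (rule partition_on_pi_of[OF assms(1)])
  show "coarser_eq (pi_of S) (pi_of S)" by (rule coarser_eq_refl)
qed (use coarser_eq_pi_of_if_separated[OF assms(2)]
      coarser_eq_antisym[OF _ partition_on_pi_of[OF assms(1)]] in blast)+

subsection \<open>Geometric toric antichains\<close>

definition vec_upd :: "'a^'n \<Rightarrow> 'n \<Rightarrow> 'a \<Rightarrow> 'a^'n" where
  "vec_upd x v t = (\<chi> k. if k = v then t else x$k)"

lemma vec_upd_nth [simp]: "vec_upd x v t $ k = (if k = v then t else x$k)"
  by (simp add: vec_upd_def)

lemma dist_vec_upd: "dist (vec_upd x v t) x \<le> \<bar>t - x$v\<bar>"
proof -
  have "dist (vec_upd x v t) x \<le> (\<Sum>k\<in>UNIV. \<bar>(vec_upd x v t - x)$k\<bar>)"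
    unfolding dist_norm by (rule norm_le_l1_cart)
  also have "\<dots> = (\<Sum>k\<in>UNIV. if k = v then \<bar>t - x$v\<bar> else 0)"
    by (intro sum.cong) auto
  finally show ?thesis by simp
qed

lemma vec_upd_mem_ball: "\<bar>t - x$v\<bar> < e \<Longrightarrow> vec_upd x v t \<in> ball x e"
  using dist_vec_upd[of x v t] by (simp add: dist_commute)

lemma pi_of_separated_if_geometric_toric_antichain:
  assumes ch: "toric_chamber E c" and ac: "geometric_toric_antichain c S"
  shows "pi_of_separated c S"
  unfolding pi_of_separated_def
proof (intro allI impI)
  fix v w assume v: "v \<notin> S" and w: "w \<noteq> v"
  obtain x where x: "x \<in> D_tor (pi_of S)" "x \<in> c"
    using ac by (auto simp: geometric_toric_antichain_def)
  obtain e where e: "e > 0" "ball x e \<subseteq> c"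
    using open_toric_chamber[OF ch] x(2) open_contains_ball by blast
  obtain t where t: "x$v < t" "t < x$v + e" "t + - x$w \<notin> \<int>"
    using open_interval_not_subset_Ints_translate[of "x$v" "x$v + e" "- x$w"] e(1) by auto
  have "vec_upd x v t \<in> c" using vec_upd_mem_ball[of t x v e] t e(2) by auto
  moreover have "vec_upd x v t \<in> D_tor (pi_of S)" using x(1) v by (auto simp: D_tor_pi_of_iff)
  ultimately show "\<exists>y\<in>closure c \<inter> D_tor (pi_of S). y$v - y$w \<notin> \<int>"
    using closure_subset t(3) w by (intro bexI[of _ "vec_upd x v t"]) auto
qed

subsection \<open>Toric intervals\<close>

lemma rotate_three: "rotate 1 [a, b, c] = [b, c, a]" "rotate 2 [a, b, c] = [c, a, b]"
  by (simp_all add: rotate_def numeral_2_eq_2)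

lemma rotate_three_cases: "rotate r [a, b, c] \<in> {[a, b, c], [b, c, a], [c, a, b]}"
proof -
  have "rotate r [a, b, c] = rotate (r mod 3) [a, b, c]" by (subst rotate_conv_mod) simp
  moreover have "r mod 3 = 0 \<or> r mod 3 = 1 \<or> r mod 3 = 2" by arith
  moreover have "rotate 0 [a, b, c] = [a, b, c]" by simp
  ultimately show ?thesis using rotate_three by (metis insertCI)
qed

lemma inj_on_if_sorted_wrt_less:
  "sorted_wrt (\<lambda>a b. f a < (f b :: 'b::linorder)) xs \<Longrightarrow> inj_on f (set xs)"
proof (induction xs)
  case (Cons a xs)
  then show ?case by (auto simp: inj_on_insert)
qed simp

definition normalized_at :: "(real^'n) set \<Rightarrow> 'n \<Rightarrow> real^'n \<Rightarrow> bool" where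
  "normalized_at c i x \<longleftrightarrow> x \<in> c \<and> x$i = 0 \<and> (\<forall>k. 0 \<le> x$k \<and> x$k < 1)"

lemma toric_chain_order_sorted_rotation:
  assumes "toric_chain_order c cs" "normalized_at c i x"
  obtains r where "sorted_wrt (\<lambda>a b. x$a < x$b) (rotate r cs)"
  using assms unfolding toric_chain_order_def normalized_at_def by blast

lemma normalized_at_toric_chain_pos:
  assumes "toric_chain c {i, j}" "i \<noteq> j" "normalized_at c i x"
  shows "0 < x$j"
proof -
  obtain cs where cs: "set cs = {i, j}" "toric_chain_order c cs"
    using assms(1) by (auto simp: toric_chain_def)
  obtain r where "sorted_wrt (\<lambda>a b. x$a < x$b) (rotate r cs)"
    by (rule toric_chain_order_sorted_rotation[OF cs(2) assms(3)])
  then have "inj_on (\<lambda>a. x$a) {i, j}"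
    using cs(1) by (metis inj_on_if_sorted_wrt_less set_rotate)
  then have "x$i \<noteq> x$j" using assms(2) by (simp add: inj_on_contraD)
  then show ?thesis using assms(3) by (auto simp: normalized_at_def order_le_less)
qed

lemma normalized_at_toric_chain_order_between:
  assumes "toric_chain_order c [i, k, j]" "normalized_at c i x"
  shows "0 < x$k \<and> x$k < x$j"
proof -
  obtain r where r: "sorted_wrt (\<lambda>a b. x$a < x$b) (rotate r [i, k, j])"
    using assms by (rule toric_chain_order_sorted_rotation)
  have "rotate r [i, k, j] = [i, k, j] \<or> rotate r [i, k, j] = [k, j, i] \<or> rotate r [i, k, j] = [j, i, k]"
    using rotate_three_cases[of r i k j] by blast
  then have "sorted_wrt (\<lambda>a b. x$a < x$b) [i, k, j] \<or> sorted_wrt (\<lambda>a b. x$a < x$b) [k, j, i] \<or>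
      sorted_wrt (\<lambda>a b. x$a < x$b) [j, i, k]"
    using r by metis
  moreover have "0 \<le> x$k" "0 \<le> x$j" "x$i = 0" using assms(2) by (auto simp: normalized_at_def)
  ultimately show ?thesis by auto
qed

lemma normalized_at_toric_interval_le:
  assumes "toric_chain c {i, j}" "i \<noteq> j" "normalized_at c i x"
    and "k \<in> {i, j} \<union> {k. toric_chain_order c [i, k, j]}"
  shows "x$k \<le> x$j"
  using assms normalized_at_toric_chain_pos[OF assms(1-3)]
    normalized_at_toric_chain_order_between[OF _ assms(3), of k j]
  by (auto simp: normalized_at_def)

definition normalize_at :: "'n \<Rightarrow> real^'n \<Rightarrow> real^'n" where
  "normalize_at i x = (\<chi> k. if x$i \<le> x$k then x$k - x$i else x$k - x$i + 1)"

lemma normalized_at_normalize_at: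
  assumes ch: "toric_chamber E c" and x: "x \<in> c" "\<forall>k. 0 \<le> x$k \<and> x$k < 1"
  shows "normalized_at c i (normalize_at i x)"
proof -
  define z where "z = (\<chi> k. if x$i \<le> x$k then 0 else (1::real))"
  have "z \<in> int_vecs" unfolding int_vecs_def z_def by simp
  then have "(x + (\<chi> k. - x$i)) + z \<in> c"
    by (rule toric_chamber_add_int_vec[OF ch toric_chamber_add_const[OF ch x(1)]])
  moreover have "(x + (\<chi> k. - x$i)) + z = normalize_at i x"
    unfolding normalize_at_def z_def by (simp add: vec_eq_iff)
  moreover have "0 \<le> normalize_at i x $ k \<and> normalize_at i x $ k < 1" for k
    using x(2)[rule_format, of k] x(2)[rule_format, of i] by (auto simp: normalize_at_def)
  ultimately show ?thesis by (simp add: normalized_at_def normalize_at_def)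
qed

lemma sorted_rotation_if_normalize_at_between:
  assumes x: "\<forall>k. 0 \<le> x$k \<and> x$k < 1"
    and between: "0 < normalize_at i x $ v" "normalize_at i x $ v < normalize_at i x $ j"
  shows "\<exists>r. sorted_wrt (\<lambda>a b. x$a < x$b) (rotate r [i, v, j])"
proof -
  have "(x$i < x$v \<and> x$v < x$j) \<or> (x$v < x$j \<and> x$j < x$i) \<or> (x$j < x$i \<and> x$i < x$v)"
    using between x[rule_format, of i] x[rule_format, of v] x[rule_format, of j]
    by (auto simp: normalize_at_def split: if_splits)
  then show ?thesis
  proof (elim disjE)
    assume "x$i < x$v \<and> x$v < x$j"
    then show ?thesis by (intro exI[of _ 0]) simp
  next
    assume "x$v < x$j \<and> x$j < x$i"
    then show ?thesis by (intro exI[of _ 1]) (simp add: rotate_three)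
  next
    assume "x$j < x$i \<and> x$i < x$v"
    then show ?thesis by (intro exI[of _ 2]) (simp only: rotate_three, simp)
  qed
qed

definition shrink_below :: "real \<Rightarrow> real \<Rightarrow> real \<Rightarrow> real" where
  "shrink_below h t y = (if y \<le> h then (1 - t) * y else y)"

lemma shrink_below_strict_mono:
  assumes "0 \<le> y" "y < y'" "0 \<le> t" "t < 1"
  shows "shrink_below h t y < shrink_below h t y'"
proof -
  have "(1 - t) * y < (1 - t) * y'" using assms by (simp add: mult_strict_left_mono)
  moreover have "(1 - t) * y \<le> y" using assms by (simp add: mult_left_le_one_le)
  ultimately show ?thesis using assms by (auto simp: shrink_below_def)
qed

lemma shrink_below_bounds:
  assumes "0 \<le> y" "y < 1" "0 \<le> t" "t \<le> 1"
  shows "0 \<le> shrink_below h t y" "shrink_below h t y < 1"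
proof -
  have "(1 - t) * y \<le> y" using assms by (simp add: mult_left_le_one_le)
  then show "0 \<le> shrink_below h t y" "shrink_below h t y < 1"
    using assms by (auto simp: shrink_below_def)
qed

text \<open>On \<open>[0,1)\<close> the map \<open>shrink_below h t\<close> is strictly increasing with values in \<open>[0,1)\<close>.\<close>

lemma shrink_below_diff_not_Ints:
  assumes "0 \<le> a" "a < 1" "0 \<le> b" "b < 1" "a - b \<notin> \<int>" "0 \<le> t" "t < 1"
  shows "shrink_below h t a - shrink_below h t b \<notin> \<int>"
proof
  assume int: "shrink_below h t a - shrink_below h t b \<in> \<int>"
  have "a \<noteq> b" using assms(5) by auto
  then have "shrink_below h t a \<noteq> shrink_below h t b"
    using shrink_below_strict_mono[of a b t h] shrink_below_strict_mono[of b a t h] assms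
    by (cases "a < b") auto
  moreover have "\<bar>shrink_below h t a - shrink_below h t b\<bar> < 1"
    using shrink_below_bounds[of a t h] shrink_below_bounds[of b t h] assms by auto
  ultimately show False using Ints_abs_less_one_eq_0[OF int] by simp
qed

lemma shrink_below_mem_closure:
  assumes ch: "toric_chamber E c" and x: "x \<in> c" "\<forall>k. 0 \<le> x$k \<and> x$k < 1"
  shows "(\<chi> k. shrink_below h 1 (x$k)) \<in> closure c"
proof -
  define g where "g t = x + t *\<^sub>R (\<chi> k. if x$k \<le> h then - x$k else 0)" for t :: real
  have g_nth: "g t $ k = shrink_below h t (x$k)" for t k
    by (simp add: g_def shrink_below_def algebra_simps)
  have cont: "continuous_on A g" for A
    unfolding g_def by (intro continuous_intros)
  have "g ` {0..<1} \<subseteq> graph_complement E"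
  proof
    fix u assume "u \<in> g ` {0..<1}"
    then obtain t where t: "0 \<le> t" "t < 1" "u = g t" by auto
    show "u \<in> graph_complement E"
      unfolding graph_complement_def
    proof (intro CollectI allI impI)
      fix k l assume "E k l"
      then have "x$k - x$l \<notin> \<int>"
        using toric_chamber_subset_graph_complement[OF ch] x(1) by (auto simp: graph_complement_def)
      then show "u$k - u$l \<notin> \<int>"
        unfolding t(3) g_nth using x(2) t by (intro shrink_below_diff_not_Ints) auto
    qed
  qed
  moreover have "connected (g ` {0..<1})"
    using cont by (intro connected_continuous_image convex_connected) auto
  moreover have "x \<in> g ` {0..<1}" by (rule image_eqI[of _ _ 0]) (simp_all add: g_def)
  ultimately have "g ` {0..<1} \<subseteq> closure c"
    using connected_subset_toric_chamber[OF ch _ _ _ x(1)] closure_subset by blast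
  then have "g ` closure {0..<1} \<subseteq> closure c"
    using cont by (intro image_closure_subset) auto
  then have "g 1 \<in> closure c" by auto
  moreover have "g 1 = (\<chi> k. shrink_below h 1 (x$k))" by (simp add: vec_eq_iff g_nth)
  ultimately show ?thesis by simp
qed

text \<open>For \<open>v\<close> outside \<open>[i,j]\<close>, some point of \<open>c\<close> does not have \<open>v\<close> cyclically between \<open>i\<close> and
\<open>j\<close>; normalised at \<open>i\<close>, its \<open>v\<close>-coordinate is \<open>\<ge> x_j\<close> or \<open>0\<close>, and in the latter case adding
\<open>1\<close> to it stays in \<open>c\<close>. Either way \<open>x_v\<close> can be varied in an interval inside \<open>[x_j, 1]\<close>.\<close>

lemma free_coordinate_outside_toric_interval:
  assumes ch: "toric_chamber E c" and chn: "toric_chain c {i, j}" and ij: "i \<noteq> j"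
    and v: "v \<notin> {i, j} \<union> {k. toric_chain_order c [i, k, j]}"
  obtains x p q where "normalized_at c i x" "x$j \<le> p" "p < q" "q \<le> 1"
    "\<And>t. p < t \<Longrightarrow> t < q \<Longrightarrow> vec_upd x v t \<in> c"
proof -
  have "distinct [i, v, j]" using v ij by auto
  then obtain x1 where x1: "x1 \<in> c" "\<forall>k. 0 \<le> x1$k \<and> x1$k < 1"
      and not_sorted: "\<forall>r. \<not> sorted_wrt (\<lambda>a b. x1$a < x1$b) (rotate r [i, v, j])"
    using v unfolding toric_chain_order_def by blast
  define x where "x = normalize_at i x1"
  have N: "normalized_at c i x" unfolding x_def by (rule normalized_at_normalize_at[OF ch x1])
  have x_bounds: "0 \<le> x$v" "x$v < 1" "0 < x$j" "x$j < 1" "x \<in> c"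
    using N normalized_at_toric_chain_pos[OF chn ij N] by (auto simp: normalized_at_def)
  have "\<not> (0 < x$v \<and> x$v < x$j)"
    using sorted_rotation_if_normalize_at_between[OF x1(2)] not_sorted unfolding x_def by blast
  then have x_v: "x$j \<le> x$v \<or> x$v = 0" using x_bounds by linarith
  define y where "y = (if x$j \<le> x$v then x else x + axis v 1)"
  have "axis v 1 \<in> int_vecs" by (simp add: int_vecs_def axis_def)
  then have "y \<in> c" using toric_chamber_add_int_vec[OF ch] x_bounds(5) by (simp add: y_def)
  then obtain e where e: "e > 0" "ball y e \<subseteq> c"
    using open_toric_chamber[OF ch] open_contains_ball by blast
  have y_v: "x$j \<le> y$v" "y$v \<le> 1" using x_v x_bounds by (auto simp: y_def axis_def)
  have upd_y: "vec_upd y v t = vec_upd x v t" for t by (simp add: y_def vec_eq_iff axis_def)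
  show thesis
  proof (rule that[OF N, of "max (x$j) (y$v - e)" "min 1 (y$v + e)"])
    fix t assume "max (x$j) (y$v - e) < t" "t < min 1 (y$v + e)"
    then have "vec_upd y v t \<in> ball y e" by (intro vec_upd_mem_ball) auto
    then show "vec_upd x v t \<in> c" using e(2) upd_y by auto
  qed (use e(1) x_bounds y_v in auto)
qed

lemma pi_of_separated_if_toric_interval:
  assumes ch: "toric_chamber E c" and chn: "toric_chain c {i, j}" and ij: "i \<noteq> j"
    and S: "S = {i, j} \<union> {k. toric_chain_order c [i, k, j]}"
  shows "pi_of_separated c S"
  unfolding pi_of_separated_def
proof (intro allI impI)
  fix v w assume v: "v \<notin> S" and w: "w \<noteq> v"
  obtain x p q where N: "normalized_at c i x" and pq: "x$j \<le> p" "p < q" "q \<le> 1"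
      and upd: "\<And>t. p < t \<Longrightarrow> t < q \<Longrightarrow> vec_upd x v t \<in> c"
    using free_coordinate_outside_toric_interval[OF ch chn ij v[unfolded S]] by blast
  have vij: "v \<noteq> i" "v \<noteq> j" using v S by auto
  define K where "K = shrink_below (x$j) 1 (x$w)"
  obtain t where t: "p < t" "t < q" "t + - K \<notin> \<int>"
    using open_interval_not_subset_Ints_translate[OF pq(2)] by blast
  define y where "y = vec_upd x v t"
  define Y where "Y = (\<chi> k. shrink_below (y$j) 1 (y$k))"
  have Ny: "normalized_at c i y"
    using N upd[OF t(1,2)] t pq vij normalized_at_toric_chain_pos[OF chn ij N]
    by (auto simp: normalized_at_def y_def)
  then have "Y \<in> closure c"
    unfolding Y_def by (intro shrink_below_mem_closure[OF ch]) (auto simp: normalized_at_def)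
  moreover have "Y \<in> D_tor (pi_of S)"
    using normalized_at_toric_interval_le[OF chn ij Ny] S
    by (auto simp: D_tor_pi_of_iff Y_def shrink_below_def)
  moreover have "Y$v - Y$w = t + - K"
    using vij w t pq by (simp add: Y_def y_def K_def shrink_below_def)
  ultimately show "\<exists>y\<in>closure c \<inter> D_tor (pi_of S). y$v - y$w \<notin> \<int>"
    using t(3) by (intro bexI[of _ Y]) auto
qed

theorem mainTheorem11:
  fixes E :: "'n::finite \<Rightarrow> 'n \<Rightarrow> bool" and c :: "(real^'n) set" and S :: "'n set"
  assumes "\<And>i j. E i j \<Longrightarrow> E j i"
    and "\<And>i. \<not> E i i"
    and "toric_chamber E c"
    and "S \<noteq> {}"
    and "(\<exists>i j. S = toric_interval c i j) \<or> geometric_toric_antichain c S"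
  shows "toric_closed c (pi_of S)"
proof (rule toric_closed_pi_of_if_separated[OF assms(4)])
  consider "geometric_toric_antichain c S"
    | i j where "S = toric_interval c i j" "i \<noteq> j" "toric_chain c {i, j}"
    | i where "S = {i}"
    using assms(4,5) by (auto simp: toric_interval_def split: if_splits)
  then show "pi_of_separated c S"
  proof cases
    case 1
    then show ?thesis by (rule pi_of_separated_if_geometric_toric_antichain[OF assms(3)])
  next
    case (2 i j)
    then show ?thesis
      by (intro pi_of_separated_if_toric_interval[OF assms(3)]) (auto simp: toric_interval_def)
  next
    case (3 i)
    then have "geometric_toric_antichain c S"
      using toric_chamber_nonempty[OF assms(3)] by (auto simp: geometric_toric_antichain_def D_tor_pi_of_iff)
    then show ?thesis by (rule pi_of_separated_if_geometric_toric_antichain[OF assms(3)])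
  qed
qed

end
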